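(* Let $\nu\in A_2$. Then $\mathcal W_\nu(\mathbb R^n)\subset\mathrm{BMO}_\nu(\mathbb R^n)$.
   Context: $A_2$: weights $w$ with $\sup_Q(\frac1{|Q|}\int_Qw)(\frac1{|Q|}\int_Qw^{-1})<\infty$; $w(E)=\int_Ew$. $\mathrm{BMO}_\nu(\mathbb R^n)$: $b\in L^1_{loc}$ with $\sup_B\frac1{\nu(B)}\int_B|b-\langle b\rangle_B|<\infty$ (supremum over balls, $\langle b\rangle_B$ the average). $\mathcal D$ is the standard dyadic system, $cQ$ the concentric dilate of $Q$ by $c$. $\ell^{n,\infty}$: sequences with $\sup_kk^{1/n}a_k^*<\infty$, $\{a_k^*\}$ the non-increasing rearrangement of $\{|a_k|\}$. $\mathcal W_\nu(\mathbb R^n)$: $b\in L^1_{loc}$ such that $\big\{\frac1{\nu(20\sqrt nQ)}\int_{20\sqrt nQ}|b-\langle b\rangle_{20\sqrt nQ}|\big\}_{Q\in\mathcal D}\in\ell^{n,\infty}$. *)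

theory Defs
  imports "HOL-Analysis.Analysis"
begin

definition cube :: "'a::euclidean_space \<Rightarrow> real \<Rightarrow> 'a set" where
  "cube c r = {x. \<forall>i\<in>Basis. \<bar>x \<bullet> i - c \<bullet> i\<bar> \<le> r}"

definition wmeas :: "('a::euclidean_space \<Rightarrow> real) \<Rightarrow> 'a set \<Rightarrow> real" where
  "wmeas w E = (LINT x:E|lebesgue. w x)"

definition avg :: "('a::euclidean_space \<Rightarrow> real) \<Rightarrow> 'a set \<Rightarrow> real" where
  "avg f S = (LINT x:S|lebesgue. f x) / measure lebesgue S"

definition loc_int :: "('a::euclidean_space \<Rightarrow> real) \<Rightarrow> bool" where
  "loc_int f \<longleftrightarrow> (\<forall>K. compact K \<longrightarrow> set_integrable lebesgue K f)"

definition A2 :: "('a::euclidean_space \<Rightarrow> real) \<Rightarrow> bool" where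
  "A2 w \<longleftrightarrow> (\<forall>x. 0 \<le> w x) \<and> (AE x in lebesgue. 0 < w x) \<and> loc_int w \<and>
     loc_int (\<lambda>x. 1 / w x) \<and>
     (\<exists>C. \<forall>c r. 0 < r \<longrightarrow> avg w (cube c r) * avg (\<lambda>x. 1 / w x) (cube c r) \<le> C)"

definition wosc :: "('a::euclidean_space \<Rightarrow> real) \<Rightarrow> ('a \<Rightarrow> real) \<Rightarrow> 'a set \<Rightarrow> real" where
  "wosc \<nu> b S = (LINT x:S|lebesgue. \<bar>b x - avg b S\<bar>) / wmeas \<nu> S"

definition BMO :: "('a::euclidean_space \<Rightarrow> real) \<Rightarrow> ('a \<Rightarrow> real) set" where
  "BMO \<nu> = {b. loc_int b \<and> (\<exists>C. \<forall>c r. 0 < r \<longrightarrow> wosc \<nu> b (ball c r) \<le> C)}"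

text \<open>Standard dyadic system: the cube indexed by (j,k) is
  {x. for all basis vectors i, 2^j k_i \<le> x\<bullet>i < 2^j (k_i+1)}; k is normalised to be 0 off Basis
  so that indices correspond bijectively to cubes.\<close>
definition dyadic_index :: "(int \<times> ('a::euclidean_space \<Rightarrow> int)) set" where
  "dyadic_index = {(j, k). \<forall>i. i \<notin> Basis \<longrightarrow> k i = 0}"

definition dyadic_cube :: "int \<Rightarrow> ('a::euclidean_space \<Rightarrow> int) \<Rightarrow> 'a set" where
  "dyadic_cube j k = {x. \<forall>i\<in>Basis. 2 powr j * k i \<le> x \<bullet> i \<and> x \<bullet> i < 2 powr j * (k i + 1)}"

definition dyadic_dilate :: "real \<Rightarrow> int \<Rightarrow> ('a::euclidean_space \<Rightarrow> int) \<Rightarrow> 'a set" where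
  "dyadic_dilate c j k =
     cube (\<Sum>i\<in>Basis. (2 powr j * (k i + 1/2)) *\<^sub>R i) (c * 2 powr j / 2)"

text \<open>Non-increasing rearrangement of |a| over index set I, k = 1,2,...\<close>
definition rearr_set :: "'i set \<Rightarrow> ('i \<Rightarrow> real) \<Rightarrow> nat \<Rightarrow> real set" where
  "rearr_set I a k = {t. 0 \<le> t \<and> finite {q\<in>I. \<bar>a q\<bar> > t} \<and> card {q\<in>I. \<bar>a q\<bar> > t} < k}"

definition rearr :: "'i set \<Rightarrow> ('i \<Rightarrow> real) \<Rightarrow> nat \<Rightarrow> real" where
  "rearr I a k = Inf (rearr_set I a k)"

definition weak_ell :: "nat \<Rightarrow> 'i set \<Rightarrow> ('i \<Rightarrow> real) \<Rightarrow> bool" where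
  "weak_ell n I a \<longleftrightarrow> (\<forall>k\<ge>1. rearr_set I a k \<noteq> {}) \<and>
     (\<exists>C. \<forall>k\<ge>1. real k powr (1 / real n) * rearr I a k \<le> C)"

definition W :: "('a::euclidean_space \<Rightarrow> real) \<Rightarrow> ('a \<Rightarrow> real) set" where
  "W \<nu> = {b. loc_int b \<and>
     weak_ell DIM('a) (dyadic_index :: (int \<times> ('a \<Rightarrow> int)) set)
       (\<lambda>(j, k). wosc \<nu> b (dyadic_dilate (20 * sqrt (DIM('a))) j k))}"

end

theory Submission
  imports Defs
begin

text \<open>Membership in \<open>W\<^sub>\<nu>\<close> gives in particular a uniform bound on the weighted mean oscillations
  of \<open>b\<close> over all dilated dyadic cubes. Every ball \<open>B\<close> lies in such a cube \<open>Q\<close> of comparable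
  Lebesgue measure. By Cauchy-Schwarz, \<open>|E|\<^sup>2 \<le> \<nu>(E) \<integral>\<^sub>Q \<nu>\<^sup>-\<^sup>1\<close> for \<open>E \<subseteq> Q\<close>, so the \<open>A\<^sub>2\<close> condition
  turns comparability of Lebesgue measures into \<open>\<nu>(Q) \<le> K \<nu>(B)\<close>. Since the mean oscillation of \<open>b\<close>
  over \<open>B\<close> is at most twice that over \<open>Q\<close>, the weighted oscillation over \<open>B\<close> is at most \<open>2K\<close> times
  the one over \<open>Q\<close>.\<close>

lemma cube_eq_cbox: "cube c r = cbox (c - r *\<^sub>R One) (c + r *\<^sub>R One)"
  unfolding cube_def cbox_def by (auto simp: inner_diff_left inner_add_left abs_le_iff algebra_simps)

lemma compact_cube: "compact (cube c r)"
  by (simp add: cube_eq_cbox)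

lemma lmeasurable_cube: "cube c r \<in> lmeasurable"
  by (simp add: cube_eq_cbox)

lemma measure_cube: "r \<ge> 0 \<Longrightarrow> measure lebesgue (cube (c::'a::euclidean_space) r) = (2 * r) ^ DIM('a)"
  by (simp add: cube_eq_cbox inner_diff_left inner_add_left)

lemma cube_subset_ball:
  fixes c :: "'a::euclidean_space"
  assumes "r > 0"
  shows "cube c (r / (2 * DIM('a))) \<subseteq> ball c r"
proof
  fix x assume x: "x \<in> cube c (r / (2 * DIM('a)))"
  have "norm (x - c) \<le> (\<Sum>i\<in>Basis. \<bar>(x - c) \<bullet> i\<bar>)"
    by (rule norm_le_l1)
  also have "\<dots> \<le> (\<Sum>i\<in>(Basis::'a set). r / (2 * DIM('a)))"
    using x unfolding cube_def by (intro sum_mono) (auto simp: inner_diff_left)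
  also have "\<dots> = r / 2"
    by simp
  finally show "x \<in> ball c r"
    using assms by (simp add: dist_norm norm_minus_commute)
qed

lemma ball_subset_cube: "ball c r \<subseteq> cube c r"
  unfolding cube_def
  by (auto simp: dist_norm norm_minus_commute inner_diff_left[symmetric]
      intro: order_trans[OF Basis_le_norm] less_imp_le)

lemma cube_subset_cube:
  assumes "x \<in> cube c s" "s + t \<le> u"
  shows "cube x t \<subseteq> cube c u"
proof
  fix y assume y: "y \<in> cube x t"
  have "\<bar>y \<bullet> i - c \<bullet> i\<bar> \<le> u" if "i \<in> Basis" for i
  proof -
    have "\<bar>y \<bullet> i - x \<bullet> i\<bar> \<le> t" "\<bar>x \<bullet> i - c \<bullet> i\<bar> \<le> s"
      using y assms(1) that unfolding cube_def by auto
    then show ?thesis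
      using assms(2) unfolding abs_le_iff by linarith
  qed
  then show "y \<in> cube c u"
    by (simp add: cube_def)
qed

lemma dyadic_dilate_one_covers:
  fixes x :: "'a::euclidean_space"
  obtains k where "(j, k) \<in> dyadic_index" "x \<in> dyadic_dilate 1 j k"
proof
  define h where "h = 2 powr j"
  define k :: "'a \<Rightarrow> int" where "k = (\<lambda>i. if i \<in> Basis then \<lfloor>x \<bullet> i / h\<rfloor> else 0)"
  show "(j, k) \<in> dyadic_index"
    unfolding dyadic_index_def k_def by auto
  have "\<bar>x \<bullet> i - h * (k i + 1/2)\<bar> \<le> h / 2" if i: "i \<in> Basis" for i
  proof -
    have "k i = \<lfloor>x \<bullet> i / h\<rfloor>"
      using i by (simp add: k_def)
    then have "k i \<le> x \<bullet> i / h" "x \<bullet> i / h < k i + 1"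
      by linarith+
    then have "h * k i \<le> x \<bullet> i" "x \<bullet> i < h * k i + h"
      by (simp_all add: h_def field_simps)
    then show ?thesis
      unfolding abs_le_iff by (simp add: algebra_simps)
  qed
  then show "x \<in> dyadic_dilate 1 j k"
    unfolding dyadic_dilate_def cube_def h_def
    by (simp add: inner_sum_left inner_Basis if_distrib cong: if_cong)
qed

lemma powr_ceiling_log_bounds:
  assumes "r > 0"
  shows "r \<le> 2 powr \<lceil>log 2 r\<rceil>" "2 powr \<lceil>log 2 r\<rceil> \<le> 2 * r"
proof -
  have "r = 2 powr (log 2 r)"
    using assms by simp
  also have "\<dots> \<le> 2 powr \<lceil>log 2 r\<rceil>"
    by (rule powr_mono) auto
  finally show "r \<le> 2 powr \<lceil>log 2 r\<rceil>" .
  have "2 powr \<lceil>log 2 r\<rceil> \<le> 2 powr (log 2 r + 1)"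
    by (rule powr_mono) auto
  also have "\<dots> = 2 * r"
    using assms by (simp add: powr_add)
  finally show "2 powr \<lceil>log 2 r\<rceil> \<le> 2 * r" .
qed

lemma ball_subset_dyadic_dilate:
  fixes c :: "'a::euclidean_space"
  assumes r: "r > 0"
  obtains j k where "(j, k) \<in> dyadic_index" "ball c r \<subseteq> dyadic_dilate (20 * sqrt DIM('a)) j k"
    "measure lebesgue (dyadic_dilate (20 * sqrt DIM('a)) j k) \<le> (40 * sqrt DIM('a) * r) ^ DIM('a)"
proof -
  define n where "n = DIM('a)"
  define j where "j = \<lceil>log 2 r\<rceil>"
  define h where "h = 2 powr j"
  have h: "r \<le> h" "h \<le> 2 * r" "h > 0"
    using powr_ceiling_log_bounds[OF r] by (simp_all add: h_def j_def)
  have sqrt_n: "sqrt n \<ge> 1"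
    by (simp add: n_def DIM_positive)
  obtain k where k: "(j, k) \<in> dyadic_index" "c \<in> dyadic_dilate 1 j k"
    by (rule dyadic_dilate_one_covers)
  define ctr :: 'a where "ctr = (\<Sum>i\<in>Basis. (2 powr j * (k i + 1/2)) *\<^sub>R i)"
  have dilate: "dyadic_dilate a j k = cube ctr (a * h / 2)" for a
    unfolding dyadic_dilate_def ctr_def h_def ..
  have "h / 2 + r \<le> 20 * sqrt n * h / 2"
    using h mult_right_mono[OF sqrt_n, of h] by linarith
  then have "ball c r \<subseteq> dyadic_dilate (20 * sqrt n) j k"
    using ball_subset_cube cube_subset_cube k(2) unfolding dilate by fastforce
  moreover have "measure lebesgue (dyadic_dilate (20 * sqrt n) j k) \<le> (40 * sqrt n * r) ^ n"
  proof -
    have "2 * (20 * sqrt n * h / 2) \<le> 40 * sqrt n * r"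
      using mult_right_mono[OF h(2), of "sqrt n"] by (simp add: algebra_simps)
    then have "(2 * (20 * sqrt n * h / 2)) ^ n \<le> (40 * sqrt n * r) ^ n"
      by (rule power_mono) (use h in simp)
    then show ?thesis
      unfolding dilate using h by (simp add: measure_cube n_def)
  qed
  ultimately show ?thesis
    using that k(1) unfolding n_def by blast
qed

lemma square_le_mult_of_AM_GM:
  fixes a x y :: real
  assumes "0 \<le> a" "0 \<le> x" "0 \<le> y" and AM_GM: "\<And>t. t > 0 \<Longrightarrow> 2 * a \<le> t * x + y / t"
  shows "a\<^sup>2 \<le> x * y"
proof (cases "x > 0 \<and> y > 0")
  case True
  define s where "s = sqrt (x * y)"
  have s: "s > 0" "s\<^sup>2 = x * y"
    using True by (auto simp: s_def)
  have "s / x * x = s" "y / (s / x) = s"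
    using True s by (simp_all add: field_simps power2_eq_square)
  then have "a \<le> s"
    using AM_GM[of "s / x"] True s by simp
  then show ?thesis
    using assms(1) s by (metis power_mono)
next
  case False
  have "\<not> a > 0"
  proof
    assume a: "a > 0"
    show False
    proof (cases "x = 0")
      case True
      have "2 * a \<le> y * a / (y + 1)"
        using AM_GM[of "(y + 1) / a"] a assms True by simp
      also have "\<dots> < a"
        using a assms(3) by (simp add: field_simps)
      finally show False
        using a by simp
    next
      case False
      then have "y = 0" "x > 0"
        using \<open>\<not> (x > 0 \<and> y > 0)\<close> assms by auto
      then show False
        using AM_GM[of "a / x"] a by simp
    qed
  qed
  then show ?thesis
    using assms by simp
qed

lemma set_integral_nonneg_AE:
  fixes f :: "'a \<Rightarrow> real"
  assumes "AE x\<in>A in M. 0 \<le> f x"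
  shows "0 \<le> (LINT x:A|M. f x)"
  unfolding set_lebesgue_integral_def
  by (rule integral_nonneg_AE) (use assms in \<open>auto split: split_indicator\<close>)

lemma set_integral_mono_set:
  fixes f :: "'a \<Rightarrow> real"
  assumes "set_integrable M A f" "B \<in> sets M" "B \<subseteq> A" "\<And>x. x \<in> A \<Longrightarrow> 0 \<le> f x"
  shows "(LINT x:B|M. f x) \<le> (LINT x:A|M. f x)"
proof -
  have "set_integrable M B f"
    using set_integrable_subset assms by blast
  then show ?thesis
    unfolding set_lebesgue_integral_def using assms
    by (intro integral_mono) (auto simp: set_integrable_def split: split_indicator)
qed

lemma set_integrable_const_lmeasurable:
  "A \<in> lmeasurable \<Longrightarrow> set_integrable lebesgue A (\<lambda>x. c :: real)"
  unfolding set_integrable_def lmeasurable_iff_integrable by (simp add: integrable_mult_right)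

lemma set_integral_const_lmeasurable:
  assumes "A \<in> lmeasurable"
  shows "(LINT x:A|lebesgue. c :: real) = measure lebesgue A * c"
  using set_integral_const[unfolded infinity_ennreal_def, OF fmeasurableD[OF assms] fmeasurableD2[OF assms], of c]
  by simp

lemma measure_sq_le_wmeas_mult_integral_inverse:
  fixes w :: "'a::euclidean_space \<Rightarrow> real"
  assumes E: "E \<in> lmeasurable" and pos: "AE x in lebesgue. 0 < w x"
    and w_int: "set_integrable lebesgue E w" and inv_int: "set_integrable lebesgue E (\<lambda>x. 1 / w x)"
  shows "(measure lebesgue E)\<^sup>2 \<le> wmeas w E * (LINT x:E|lebesgue. 1 / w x)"
proof (rule square_le_mult_of_AM_GM)
  show "0 \<le> wmeas w E" "0 \<le> (LINT x:E|lebesgue. 1 / w x)"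
    unfolding wmeas_def using pos by (auto intro!: set_integral_nonneg_AE elim: AE_mp)
  fix t :: real assume t: "t > 0"
  have "2 * measure lebesgue E = (LINT x:E|lebesgue. 2)"
    using set_integral_const_lmeasurable[OF E] by simp
  also have "\<dots> \<le> (LINT x:E|lebesgue. t * w x + (1 / w x) / t)"
  proof (rule set_integral_mono_AE)
    show "set_integrable lebesgue E (\<lambda>x. 2::real)"
      by (rule set_integrable_const_lmeasurable[OF E])
    show "set_integrable lebesgue E (\<lambda>x. t * w x + (1 / w x) / t)"
      by (intro set_integral_add set_integrable_mult_right set_integrable_divide w_int inv_int)
    show "AE x\<in>E in lebesgue. 2 \<le> t * w x + (1 / w x) / t"
      using pos
    proof eventually_elim
      case (elim x)
      define u where "u = t * w x"
      have "u > 0"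
        using elim t by (simp add: u_def)
      moreover have "0 \<le> (u - 1)\<^sup>2"
        by simp
      ultimately have "2 \<le> u + 1 / u"
        by (simp add: field_simps power2_eq_square algebra_simps)
      then show ?case
        by (simp add: u_def mult.commute)
    qed
  qed
  also have "\<dots> = t * wmeas w E + (LINT x:E|lebesgue. 1 / w x) / t"
    unfolding wmeas_def
    by (subst set_integral_add(2))
       (auto intro: set_integrable_mult_right set_integrable_divide w_int inv_int
         simp only: set_integral_mult_right set_integral_divide_zero)
  finally show "2 * measure lebesgue E \<le> t * wmeas w E + (LINT x:E|lebesgue. 1 / w x) / t" .
qed (rule measure_nonneg)

lemma wmeas_nonneg: "(\<And>x. 0 \<le> w x) \<Longrightarrow> 0 \<le> wmeas w E"
  unfolding wmeas_def by (rule set_integral_nonneg_AE) simp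

lemma wmeas_mono:
  assumes "loc_int w" "\<And>x. 0 \<le> w x" "A \<in> sets lebesgue" "B \<in> sets lebesgue" "A \<subseteq> B" "bounded B"
  shows "wmeas w A \<le> wmeas w B"
proof -
  have "set_integrable lebesgue (closure B) w"
    using assms(1,6) compact_closure unfolding loc_int_def by blast
  then have "set_integrable lebesgue B w"
    using assms(4) closure_subset by (rule set_integrable_subset)
  then show ?thesis
    unfolding wmeas_def by (rule set_integral_mono_set) (use assms in auto)
qed

lemma measure_sq_mult_wmeas_le:
  fixes w :: "'a::euclidean_space \<Rightarrow> real"
  assumes w: "\<And>x. 0 \<le> w x" "AE x in lebesgue. 0 < w x"
    and Q: "Q \<in> lmeasurable" "set_integrable lebesgue Q w" "set_integrable lebesgue Q (\<lambda>x. 1 / w x)"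
    and E: "E \<in> sets lebesgue" "E \<subseteq> Q"
    and A2_Q: "wmeas w Q * (LINT x:Q|lebesgue. 1 / w x) \<le> C * (measure lebesgue Q)\<^sup>2"
  shows "(measure lebesgue E)\<^sup>2 * wmeas w Q \<le> C * (measure lebesgue Q)\<^sup>2 * wmeas w E"
proof -
  let ?I = "\<lambda>S. LINT x:S|lebesgue. 1 / w x"
  have w_meas: "0 \<le> wmeas w E" "0 \<le> wmeas w Q"
    using w(1) by (simp_all add: wmeas_nonneg)
  have "E \<in> lmeasurable"
    using E Q(1) fmeasurableI2 by blast
  then have "(measure lebesgue E)\<^sup>2 \<le> wmeas w E * ?I E"
    using w(2) E set_integrable_subset[OF Q(2)] set_integrable_subset[OF Q(3)]
    by (intro measure_sq_le_wmeas_mult_integral_inverse) auto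
  also have "\<dots> \<le> wmeas w E * ?I Q"
    using E w(1) w_meas by (intro mult_left_mono set_integral_mono_set[OF Q(3)]) auto
  finally have "(measure lebesgue E)\<^sup>2 * wmeas w Q \<le> wmeas w E * ?I Q * wmeas w Q"
    using w_meas by (simp add: mult_right_mono)
  also have "\<dots> = wmeas w E * (wmeas w Q * ?I Q)"
    by simp
  also have "\<dots> \<le> wmeas w E * (C * (measure lebesgue Q)\<^sup>2)"
    using A2_Q w_meas(1) by (rule mult_left_mono)
  finally show ?thesis
    by (simp add: algebra_simps)
qed

lemma A2_wmeas_cube_le:
  fixes w :: "'a::euclidean_space \<Rightarrow> real"
  assumes "A2 w"
  obtains C where "C \<ge> 0" "\<And>c r E L. 0 < r \<Longrightarrow> E \<in> sets lebesgue \<Longrightarrow> E \<subseteq> cube c r \<Longrightarrow>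
     measure lebesgue E > 0 \<Longrightarrow> measure lebesgue (cube c r) \<le> L * measure lebesgue E \<Longrightarrow>
     wmeas w (cube c r) \<le> C * L\<^sup>2 * wmeas w E"
proof -
  have w: "\<And>x. 0 \<le> w x" "AE x in lebesgue. 0 < w x"
    and w_loc: "loc_int w" and inv_loc: "loc_int (\<lambda>x. 1 / w x)"
    using assms unfolding A2_def by auto
  obtain C where C: "\<And>c r. 0 < r \<Longrightarrow> avg w (cube c r) * avg (\<lambda>x. 1 / w x) (cube c r) \<le> C"
    using assms unfolding A2_def by auto
  have "wmeas w (cube c r) \<le> max C 0 * L\<^sup>2 * wmeas w E"
    if r: "0 < r" and E: "E \<in> sets lebesgue" "E \<subseteq> cube c r" and E_pos: "measure lebesgue E > 0"
      and L: "measure lebesgue (cube c r) \<le> L * measure lebesgue E" for c r E L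
  proof -
    let ?Q = "cube c r"
    have "avg w ?Q * avg (\<lambda>x. 1 / w x) ?Q \<le> max C 0"
      using C[OF r, of c] by linarith
    moreover have "measure lebesgue ?Q > 0"
      using r by (simp add: measure_cube)
    ultimately have "wmeas w ?Q * (LINT x:?Q|lebesgue. 1 / w x) \<le> max C 0 * (measure lebesgue ?Q)\<^sup>2"
      by (simp add: avg_def wmeas_def field_simps power2_eq_square)
    moreover have "set_integrable lebesgue ?Q w" "set_integrable lebesgue ?Q (\<lambda>x. 1 / w x)"
      using w_loc inv_loc compact_cube unfolding loc_int_def by blast+
    ultimately have "(measure lebesgue E)\<^sup>2 * wmeas w ?Q \<le> max C 0 * (measure lebesgue ?Q)\<^sup>2 * wmeas w E"
      using w E by (intro measure_sq_mult_wmeas_le) (auto simp: lmeasurable_cube)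
    also have "\<dots> \<le> max C 0 * (L * measure lebesgue E)\<^sup>2 * wmeas w E"
      using L w(1) by (intro mult_right_mono mult_left_mono power_mono) (auto simp: wmeas_nonneg)
    finally have "(measure lebesgue E)\<^sup>2 * wmeas w ?Q \<le> (measure lebesgue E)\<^sup>2 * (max C 0 * L\<^sup>2 * wmeas w E)"
      by (simp add: power_mult_distrib algebra_simps)
    then show ?thesis
      using E_pos by simp
  qed
  then show ?thesis
    using that[of "max C 0"] by simp
qed

lemma A2_wmeas_dyadic_dilate_le_ball:
  fixes w :: "'a::euclidean_space \<Rightarrow> real"
  assumes "A2 w"
  obtains K where "K \<ge> 0" "\<And>c r. 0 < r \<Longrightarrow> \<exists>j k. (j, k) \<in> dyadic_index \<and>
     ball c r \<subseteq> dyadic_dilate (20 * sqrt DIM('a)) j k \<and>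
     wmeas w (dyadic_dilate (20 * sqrt DIM('a)) j k) \<le> K * wmeas w (ball c r)"
proof -
  obtain C where C: "C \<ge> 0" and cube_le: "\<And>c r E L. 0 < r \<Longrightarrow> E \<in> sets lebesgue \<Longrightarrow> E \<subseteq> cube c r \<Longrightarrow>
     measure lebesgue E > 0 \<Longrightarrow> measure lebesgue (cube c r) \<le> L * measure lebesgue E \<Longrightarrow>
     wmeas w (cube c r) \<le> C * L\<^sup>2 * wmeas w E"
    using A2_wmeas_cube_le[OF assms] by blast
  have w_nonneg: "\<And>x. 0 \<le> w x" and w_loc: "loc_int w"
    using assms unfolding A2_def by auto
  define n where "n = DIM('a)"
  have n: "n > 0"
    by (simp add: n_def)
  define L :: real where "L = (40 * real n * sqrt n) ^ n"
  have "\<exists>j k. (j, k) \<in> dyadic_index \<and> ball c r \<subseteq> dyadic_dilate (20 * sqrt n) j k \<and>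
     wmeas w (dyadic_dilate (20 * sqrt n) j k) \<le> C * L\<^sup>2 * wmeas w (ball c r)"
    if r: "0 < r" for c :: 'a and r
  proof -
    obtain j k where jk: "(j, k) \<in> dyadic_index" and B_sub: "ball c r \<subseteq> dyadic_dilate (20 * sqrt n) j k"
      and Q_meas: "measure lebesgue (dyadic_dilate (20 * sqrt n) j k :: 'a set) \<le> (40 * sqrt n * r) ^ n"
      using ball_subset_dyadic_dilate[OF r, of c] unfolding n_def by blast
    obtain ctr where Q: "dyadic_dilate (20 * sqrt n) j k = cube ctr (10 * sqrt n * 2 powr j)"
      unfolding dyadic_dilate_def by (simp add: mult.assoc)
    define E where "E = cube c (r / (2 * n))"
    have E: "E \<in> sets lebesgue" "E \<subseteq> ball c r" "measure lebesgue E = (r / n) ^ n"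
      using r cube_subset_ball[OF r, of c]
      by (simp_all add: E_def fmeasurableD lmeasurable_cube measure_cube n_def)
    have "L * (r / n) ^ n = (40 * real n * sqrt n * (r / n)) ^ n"
      unfolding L_def by (simp only: power_mult_distrib)
    also have "40 * real n * sqrt n * (r / n) = 40 * sqrt n * r"
      using n by simp
    finally have "wmeas w (cube ctr (10 * sqrt n * 2 powr j)) \<le> C * L\<^sup>2 * wmeas w E"
      using Q Q_meas B_sub E r n by (intro cube_le) auto
    also have "\<dots> \<le> C * L\<^sup>2 * wmeas w (ball c r)"
      using C E w_nonneg w_loc by (intro mult_left_mono wmeas_mono) auto
    finally show ?thesis
      using jk B_sub Q by metis
  qed
  then show ?thesis
    using that[of "C * L\<^sup>2"] C unfolding n_def by simp
qed

lemma set_integral_abs_sub_avg_le: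
  fixes b :: "'a::euclidean_space \<Rightarrow> real"
  assumes B: "B \<in> lmeasurable" "measure lebesgue B > 0" and b: "set_integrable lebesgue B b"
  shows "(LINT x:B|lebesgue. \<bar>b x - avg b B\<bar>) \<le> 2 * (LINT x:B|lebesgue. \<bar>b x - m\<bar>)"
proof -
  have const: "\<And>c. set_integrable lebesgue B (\<lambda>x. c :: real)"
    by (rule set_integrable_const_lmeasurable[OF B(1)])
  have b_m: "set_integrable lebesgue B (\<lambda>x. b x - m)"
    using b const by (rule set_integral_diff)
  have b_avg: "set_integrable lebesgue B (\<lambda>x. b x - avg b B)"
    using b const by (rule set_integral_diff)
  have abs_b_m: "set_integrable lebesgue B (\<lambda>x. \<bar>b x - m\<bar>)"
    by (rule set_integrable_abs[OF b_m])
  have "(LINT x:B|lebesgue. \<bar>b x - avg b B\<bar>) \<le> (LINT x:B|lebesgue. \<bar>b x - m\<bar> + \<bar>m - avg b B\<bar>)"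
    by (rule set_integral_mono[OF set_integrable_abs[OF b_avg] set_integral_add(1)[OF abs_b_m const]])
       auto
  also have "\<dots> = (LINT x:B|lebesgue. \<bar>b x - m\<bar>) + measure lebesgue B * \<bar>m - avg b B\<bar>"
    using set_integral_add(2)[OF abs_b_m const] set_integral_const_lmeasurable[OF B(1)] by simp
  also have "measure lebesgue B * \<bar>m - avg b B\<bar> = \<bar>LINT x:B|lebesgue. b x - m\<bar>"
  proof -
    have "(LINT x:B|lebesgue. b x - m) = (LINT x:B|lebesgue. b x) - measure lebesgue B * m"
      using set_integral_diff(2)[OF b const] set_integral_const_lmeasurable[OF B(1)] by simp
    also have "\<dots> = measure lebesgue B * (avg b B - m)"
      using B(2) by (simp add: avg_def algebra_simps)
    finally show ?thesis
      using B(2) by (simp add: abs_mult abs_minus_commute)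
  qed
  also have "\<bar>LINT x:B|lebesgue. b x - m\<bar> \<le> (LINT x:B|lebesgue. \<bar>b x - m\<bar>)"
    using set_integral_norm_bound[OF b_m] by simp
  finally show ?thesis
    by linarith
qed

lemma wosc_le_of_subset:
  fixes w b :: "'a::euclidean_space \<Rightarrow> real"
  assumes Q: "Q \<in> lmeasurable" and B: "B \<in> lmeasurable" "B \<subseteq> Q" "measure lebesgue B > 0"
    and b: "set_integrable lebesgue Q b"
    and w: "\<And>x. 0 \<le> w x" "set_integrable lebesgue Q w" and K: "wmeas w Q \<le> K * wmeas w B"
  shows "wosc w b B \<le> 2 * K * wosc w b Q"
proof -
  have "0 \<le> wmeas w B"
    using w(1) by (rule wmeas_nonneg)
  have "wmeas w B \<le> wmeas w Q"
    using w B unfolding wmeas_def by (auto intro!: set_integral_mono_set fmeasurableD)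
  show ?thesis
  proof (cases "wmeas w B = 0")
    case True
    then show ?thesis
      using K \<open>wmeas w B \<le> wmeas w Q\<close> by (simp add: wosc_def)
  next
    case False
    then have wB: "wmeas w B > 0"
      using \<open>0 \<le> wmeas w B\<close> by simp
    then have wQ: "wmeas w Q > 0"
      using \<open>wmeas w B \<le> wmeas w Q\<close> by simp
    have osc_nonneg: "0 \<le> wosc w b Q"
      using wQ unfolding wosc_def by (auto intro!: divide_nonneg_pos set_integral_nonneg_AE)
    have "(LINT x:B|lebesgue. \<bar>b x - avg b B\<bar>) \<le> 2 * (LINT x:B|lebesgue. \<bar>b x - avg b Q\<bar>)"
      using B set_integrable_subset[OF b] by (intro set_integral_abs_sub_avg_le) (auto simp: fmeasurableD)
    also have "\<dots> \<le> 2 * (LINT x:Q|lebesgue. \<bar>b x - avg b Q\<bar>)"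
    proof -
      have "set_integrable lebesgue Q (\<lambda>x. \<bar>b x - avg b Q\<bar>)"
        using b set_integrable_const_lmeasurable[OF Q]
        by (intro set_integrable_abs set_integral_diff(1))
      then show ?thesis
        using B by (auto intro!: set_integral_mono_set fmeasurableD)
    qed
    also have "\<dots> = 2 * wosc w b Q * wmeas w Q"
      using wQ by (simp add: wosc_def)
    also have "\<dots> \<le> 2 * wosc w b Q * (K * wmeas w B)"
      using K osc_nonneg by (intro mult_left_mono) auto
    finally show ?thesis
      using wB by (simp add: wosc_def pos_divide_le_eq algebra_simps)
  qed
qed

lemma weak_ell_bounded:
  assumes "weak_ell n I a"
  obtains C where "\<And>q. q \<in> I \<Longrightarrow> \<bar>a q\<bar> \<le> C"
proof -
  obtain C where nonempty: "rearr_set I a 1 \<noteq> {}" and C: "real 1 powr (1 / real n) * rearr I a 1 \<le> C"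
    using assms unfolding weak_ell_def by auto
  have "\<bar>a q\<bar> \<le> rearr I a 1" if "q \<in> I" for q
    unfolding rearr_def
  proof (rule cInf_greatest[OF nonempty])
    fix t assume "t \<in> rearr_set I a 1"
    then have "{q\<in>I. \<bar>a q\<bar> > t} = {}"
      unfolding rearr_set_def by auto
    then show "\<bar>a q\<bar> \<le> t"
      using that by auto
  qed
  then show ?thesis
    using that C by fastforce
qed

theorem lemma6p1:
  fixes \<nu> :: "'a::euclidean_space \<Rightarrow> real"
  assumes "A2 \<nu>"
  shows "W \<nu> \<subseteq> BMO \<nu>"
proof
  fix b assume "b \<in> W \<nu>"
  then have b_loc: "loc_int b" and "weak_ell DIM('a) (dyadic_index :: (int \<times> ('a \<Rightarrow> int)) set)
      (\<lambda>(j, k). wosc \<nu> b (dyadic_dilate (20 * sqrt DIM('a)) j k))"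
    unfolding W_def by auto
  then obtain C where C: "\<And>j k. (j, k) \<in> (dyadic_index :: (int \<times> ('a \<Rightarrow> int)) set) \<Longrightarrow>
      wosc \<nu> b (dyadic_dilate (20 * sqrt DIM('a)) j k) \<le> C"
    by (elim weak_ell_bounded) (metis (no_types, lifting) abs_le_D1 case_prod_conv)
  obtain K where K: "K \<ge> 0" and cover: "\<And>c r. 0 < r \<Longrightarrow> \<exists>j k. (j, k) \<in> dyadic_index \<and>
      ball c r \<subseteq> dyadic_dilate (20 * sqrt DIM('a)) j k \<and>
      wmeas \<nu> (dyadic_dilate (20 * sqrt DIM('a)) j k) \<le> K * wmeas \<nu> (ball c r)"
    using A2_wmeas_dyadic_dilate_le_ball[OF assms] by blast
  have \<nu>_nonneg: "\<And>x. 0 \<le> \<nu> x" and \<nu>_loc: "loc_int \<nu>"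
    using assms unfolding A2_def by auto
  have "wosc \<nu> b (ball c r) \<le> 2 * K * C" if r: "0 < r" for c r
  proof -
    obtain j k where jk: "(j, k) \<in> dyadic_index" and "ball c r \<subseteq> dyadic_dilate (20 * sqrt DIM('a)) j k"
      "wmeas \<nu> (dyadic_dilate (20 * sqrt DIM('a)) j k) \<le> K * wmeas \<nu> (ball c r)"
      using cover[OF r] by blast
    then have "wosc \<nu> b (ball c r) \<le> 2 * K * wosc \<nu> b (dyadic_dilate (20 * sqrt DIM('a)) j k)"
      using r b_loc \<nu>_loc \<nu>_nonneg content_ball_pos[of r c]
      by (intro wosc_le_of_subset) (auto simp: dyadic_dilate_def lmeasurable_cube loc_int_def compact_cube)
    also have "\<dots> \<le> 2 * K * C"
      using C[OF jk] K by (intro mult_left_mono) auto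
    finally show ?thesis .
  qed
  then show "b \<in> BMO \<nu>"
    unfolding BMO_def using b_loc by blast
qed

end
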